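(* In the SVAR(1) model with regime chain $\{I_n\}$ on $\{1,\dots,r\}$, for $i\in\{1,\dots,r\}$ and $n\ge1$ let $\Phi_n(i)=\mathbb{E}\big[\|A_n\cdots A_1\|\,\big|\,I_0=i\big]$, where $\|\cdot\|$ is a submultiplicative matrix norm. Then $\Phi_n(i)\to0$ as $n\to\infty$ for every $i$ if and only if there exist constants $C<\infty$ and $\gamma\in(0,1)$ such that $\Phi_n(i)\le C\gamma^n$ for all $n\ge1$ and all $i$.
   Context: SVAR(1) model: let $\{I_n\}$ be a Markov chain on the finite set $\mathcal{S}=\{1,\dots,r\}$. Given fixed real $p\times p$ matrices $B_1,\dots,B_r$ and fixed $p\times p$ matrices $\Sigma_1,\dots,\Sigma_r$, set $A_n=\sum_{i=1}^rB_i\mathbf{1}_{\{I_n=i\}}$ and $E_n=\sum_{i=1}^r\Sigma_i\varepsilon_{ni}\mathbf{1}_{\{I_n=i\}}$, where for each $i$ the sequence $(\varepsilon_{ni})_n$ is i.i.d. with mean zero and identity covariance matrix, the sequences $(\varepsilon_{n1})_n,\dots,(\varepsilon_{nr})_n$ are mutually independent, and $\{I_n\}$ is independent of all the $\varepsilon_{ni}$. The model is $X_n=A_nX_{n-1}+E_n$. *)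

theory Defs
  imports "HOL-Analysis.Analysis"
begin

text \<open>Regime chain: time-homogeneous Markov chain on the finite state type 's with
  transition matrix P (P i j = Pr(I_{n+1} = j | I_n = i)).\<close>
definition stochastic_matrix :: "('s::finite \<Rightarrow> 's \<Rightarrow> real) \<Rightarrow> bool" where
  "stochastic_matrix P \<longleftrightarrow> (\<forall>i j. 0 \<le> P i j) \<and> (\<forall>i. (\<Sum>j\<in>UNIV. P i j) = 1)"

definition submult_matrix_norm :: "(real^'p^'p \<Rightarrow> real) \<Rightarrow> bool" where
  "submult_matrix_norm N \<longleftrightarrow>
     (\<forall>A. 0 \<le> N A) \<and> (\<forall>A. N A = 0 \<longleftrightarrow> A = 0) \<and>
     (\<forall>c A. N (c *\<^sub>R A) = \<bar>c\<bar> * N A) \<and>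
     (\<forall>A B. N (A + B) \<le> N A + N B) \<and>
     (\<forall>A B. N (A ** B) \<le> N A * N B)"

text \<open>Probability that the chain started at I_0 = i follows the path
  I_1 = xs!0, ..., I_n = xs!(n-1).\<close>
definition path_prob :: "('s \<Rightarrow> 's \<Rightarrow> real) \<Rightarrow> 's \<Rightarrow> 's list \<Rightarrow> real" where
  "path_prob P i xs = (\<Prod>k<length xs. P ((i # xs) ! k) ((i # xs) ! Suc k))"

text \<open>The random coefficient product A_n \<cdots> A_1 along the path xs = [I_1,...,I_n],
  where A_k = B (I_k).\<close>
definition coef_prod :: "('s \<Rightarrow> real^'p^'p) \<Rightarrow> 's list \<Rightarrow> real^'p^'p" where
  "coef_prod B xs = fold (\<lambda>s M. B s ** M) xs (mat 1)"

text \<open>Phi_n(i) = E[ N(A_n \<cdots> A_1) | I_0 = i ].\<close>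
definition Phi :: "('s::finite \<Rightarrow> 's \<Rightarrow> real) \<Rightarrow> ('s \<Rightarrow> real^'p^'p) \<Rightarrow> (real^'p^'p \<Rightarrow> real)
    \<Rightarrow> nat \<Rightarrow> 's \<Rightarrow> real" where
  "Phi P B N n i = (\<Sum>xs\<in>{xs::'s list. length xs = n}. path_prob P i xs * N (coef_prod B xs))"

end

theory Submission
  imports Defs
begin

text \<open>Cutting a path of length \<open>m + n\<close> after \<open>m\<close> steps and using the Markov property and
  submultiplicativity of the norm gives \<open>\<Phi>\<^sub>m\<^sub>+\<^sub>n(i) \<le> \<Phi>\<^sub>m(i) \<cdot> \<Sigma>\<^sub>j \<Phi>\<^sub>n(j)\<close>. Hence
  \<open>S\<^sub>n = \<Sigma>\<^sub>j \<Phi>\<^sub>n(j)\<close> is a nonnegative submultiplicative sequence. If it tends to \<open>0\<close>, then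
  \<open>S\<^sub>k \<le> 1/2\<close> for some \<open>k\<close>, and submultiplicativity yields \<open>S\<^sub>n \<le> C (1/2)\<^bsup>n div k\<^esup>\<close>,
  a geometric bound with ratio \<open>2\<^bsup>-1/k\<^esup>\<close>.\<close>

lemma submultiplicative_block_bound:
  fixes S :: "nat \<Rightarrow> real"
  assumes nonneg: "\<And>n. 0 \<le> S n"
    and submult: "\<And>m n. S (m + n) \<le> S m * S n"
    and "r < k"
  shows "S (q * k + r) \<le> (\<Sum>j<k. S j) * S k ^ q"
proof (induction q)
  case 0
  show ?case
    using \<open>r < k\<close> nonneg by (simp add: member_le_sum)
next
  case (Suc q)
  have "S (Suc q * k + r) = S (k + (q * k + r))"
    by (simp add: algebra_simps)
  also have "\<dots> \<le> S k * S (q * k + r)"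
    by (rule submult)
  also have "\<dots> \<le> S k * ((\<Sum>j<k. S j) * S k ^ q)"
    using Suc nonneg by (rule mult_left_mono)
  finally show ?case
    by (simp add: algebra_simps)
qed

lemma submultiplicative_tendsto_zero_imp_geometric:
  fixes S :: "nat \<Rightarrow> real"
  assumes nonneg: "\<And>n. 0 \<le> S n"
    and submult: "\<And>m n. S (m + n) \<le> S m * S n"
    and "S \<longlonglongrightarrow> 0"
  obtains C \<gamma> where "0 < \<gamma>" "\<gamma> < 1" "\<And>n. S n \<le> C * \<gamma> ^ n"
proof -
  have "eventually (\<lambda>n. S n < 1/2) sequentially"
    using \<open>S \<longlonglongrightarrow> 0\<close> by (rule order_tendstoD) simp
  then obtain k0 where k0: "\<And>n. n \<ge> k0 \<Longrightarrow> S n < 1/2"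
    by (auto simp: eventually_sequentially)
  define k where "k = Suc k0"
  have "0 < k" and Sk: "S k \<le> 1/2"
    using k0[of k] by (auto simp: k_def)
  define K where "K = (\<Sum>j<k. S j)"
  define \<gamma> where "\<gamma> = root k (1/2)"
  have "0 < \<gamma>" "\<gamma> < 1" and \<gamma>_pow_k: "\<gamma> ^ k = 1/2"
    using \<open>0 < k\<close> by (auto simp: \<gamma>_def real_root_pow_pos)
  have "S n \<le> 2 * K * \<gamma> ^ n" for n
  proof -
    define q where "q = n div k"
    define r where "r = n mod k"
    have n: "n = q * k + r" and "r < k"
      using \<open>0 < k\<close> by (simp_all add: q_def r_def)
    have "\<gamma> ^ k \<le> \<gamma> ^ r"
      using \<open>r < k\<close> \<open>0 < \<gamma>\<close> \<open>\<gamma> < 1\<close> by (intro power_decreasing) auto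
    then have half_le: "(1/2) ^ q * (1/2) \<le> (1/2) ^ q * \<gamma> ^ r"
      by (simp add: \<gamma>_pow_k)
    have "\<gamma> ^ n = (1/2) ^ q * \<gamma> ^ r"
      by (simp add: n power_add mult.commute[of q k] power_mult \<gamma>_pow_k)
    then have geom: "(1/2) ^ q \<le> 2 * \<gamma> ^ n"
      using half_le by simp
    have "K \<ge> 0"
      unfolding K_def using nonneg by (simp add: sum_nonneg)
    have "S n \<le> K * S k ^ q"
      unfolding n K_def using nonneg submult \<open>r < k\<close> by (rule submultiplicative_block_bound)
    also have "\<dots> \<le> K * (1/2) ^ q"
      using Sk nonneg \<open>K \<ge> 0\<close> by (intro mult_left_mono power_mono) auto
    also have "\<dots> \<le> K * (2 * \<gamma> ^ n)"
      using geom \<open>K \<ge> 0\<close> by (rule mult_left_mono)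
    finally show ?thesis
      by (simp add: mult_ac)
  qed
  with \<open>0 < \<gamma>\<close> \<open>\<gamma> < 1\<close> show ?thesis
    using that by blast
qed

lemma geometric_bound_imp_tendsto_zero:
  fixes f :: "nat \<Rightarrow> real"
  assumes "\<And>n. 0 \<le> f n"
    and "\<And>n. n \<ge> n0 \<Longrightarrow> f n \<le> C * \<gamma> ^ n"
    and "\<bar>\<gamma>\<bar> < 1"
  shows "f \<longlonglongrightarrow> 0"
proof (rule tendsto_sandwich[OF _ _ tendsto_const])
  show "eventually (\<lambda>n. 0 \<le> f n) sequentially"
    using assms(1) by (intro always_eventually allI)
  show "eventually (\<lambda>n. f n \<le> C * \<gamma> ^ n) sequentially"
    using assms(2) by (rule eventually_sequentiallyI)
  show "(\<lambda>n. C * \<gamma> ^ n) \<longlonglongrightarrow> 0"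
    using assms(3) by (intro tendsto_mult_right_zero LIMSEQ_power_zero) simp
qed

lemma fold_coef_prod:
  fixes B :: "'s \<Rightarrow> real^'n^'n" and M :: "real^'n^'n"
  shows "fold (\<lambda>s M. B s ** M) xs M = coef_prod B xs ** M"
proof (induction xs arbitrary: M)
  case Nil
  show ?case
    by (simp add: coef_prod_def matrix_mul_lid)
next
  case (Cons x xs)
  have "coef_prod B (x # xs) = coef_prod B xs ** B x"
    using Cons[of "B x ** mat 1"] by (simp add: coef_prod_def matrix_mul_rid)
  then show ?case
    using Cons[of "B x ** M"] by (simp add: matrix_mul_assoc)
qed

lemma coef_prod_append: "coef_prod B (xs @ ys) = coef_prod B ys ** coef_prod B xs"
proof -
  have "coef_prod B (xs @ ys) = fold (\<lambda>s M. B s ** M) ys (coef_prod B xs)"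
    by (simp add: coef_prod_def)
  then show ?thesis
    by (simp only: fold_coef_prod)
qed

lemma path_prob_Nil: "path_prob P i [] = 1"
  by (simp add: path_prob_def)

lemma path_prob_Cons: "path_prob P i (x # xs) = P i x * path_prob P x xs"
  unfolding path_prob_def length_Cons prod.lessThan_Suc_shift by simp

lemma path_prob_append:
  "path_prob P i (xs @ ys) = path_prob P i xs * path_prob P (last (i # xs)) ys"
  by (induction xs arbitrary: i) (auto simp: path_prob_Nil path_prob_Cons)

lemma path_prob_nonneg:
  assumes "\<And>i j. 0 \<le> P i j"
  shows "0 \<le> path_prob P i xs"
  unfolding path_prob_def using assms by (auto intro: prod_nonneg)

lemma Phi_nonneg:
  assumes "\<And>i j. 0 \<le> P i j" and "\<And>A. 0 \<le> N A"
  shows "0 \<le> Phi P B N n i"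
  unfolding Phi_def using path_prob_nonneg[of P, OF assms(1)] assms(2)
  by (intro sum_nonneg mult_nonneg_nonneg)

lemma lists_length_add_eq:
  "{zs. length zs = m + n} = (\<lambda>(xs, ys). xs @ ys) ` ({xs. length xs = m} \<times> {ys. length ys = n})"
proof (intro equalityI subsetI)
  fix zs :: "'a list"
  assume "zs \<in> {zs. length zs = m + n}"
  then show "zs \<in> (\<lambda>(xs, ys). xs @ ys) ` ({xs. length xs = m} \<times> {ys. length ys = n})"
    by (intro image_eqI[of _ _ "(take m zs, drop m zs)"]) auto
qed auto

lemma Phi_add_le:
  fixes P :: "'s::finite \<Rightarrow> 's \<Rightarrow> real"
  assumes P_nonneg: "\<And>i j. 0 \<le> P i j"
    and N_nonneg: "\<And>A. 0 \<le> N A"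
    and N_mult: "\<And>A A'. N (A ** A') \<le> N A * N A'"
  shows "Phi P B N (m + n) i \<le> Phi P B N m i * (\<Sum>j\<in>UNIV. Phi P B N n j)"
proof -
  let ?w = "\<lambda>j xs. path_prob P j xs * N (coef_prod B xs)"
  have inj: "inj_on (\<lambda>(xs, ys). xs @ ys) ({xs::'s list. length xs = m} \<times> {ys. length ys = n})"
    by (auto simp: inj_on_def)
  have "Phi P B N (m + n) i =
      (\<Sum>xs | length xs = m. \<Sum>ys | length ys = n.
         path_prob P i xs * path_prob P (last (i # xs)) ys * N (coef_prod B ys ** coef_prod B xs))"
    unfolding Phi_def lists_length_add_eq sum.reindex[OF inj]
    by (simp add: sum.cartesian_product path_prob_append coef_prod_append case_prod_unfold)
  also have "\<dots> \<le> (\<Sum>xs | length xs = m. \<Sum>ys | length ys = n. ?w i xs * ?w (last (i # xs)) ys)"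
  proof (intro sum_mono)
    fix xs ys :: "'s list"
    have "0 \<le> path_prob P i xs * path_prob P (last (i # xs)) ys"
      using path_prob_nonneg[of P, OF P_nonneg] by simp
    with N_mult have "path_prob P i xs * path_prob P (last (i # xs)) ys * N (coef_prod B ys ** coef_prod B xs)
        \<le> path_prob P i xs * path_prob P (last (i # xs)) ys * (N (coef_prod B ys) * N (coef_prod B xs))"
      by (intro mult_left_mono)
    then show "path_prob P i xs * path_prob P (last (i # xs)) ys * N (coef_prod B ys ** coef_prod B xs)
        \<le> ?w i xs * ?w (last (i # xs)) ys"
      by (simp add: algebra_simps)
  qed
  also have "\<dots> = (\<Sum>xs | length xs = m. ?w i xs * Phi P B N n (last (i # xs)))"
    by (simp add: Phi_def sum_distrib_left)
  also have "\<dots> \<le> (\<Sum>xs | length xs = m. ?w i xs * (\<Sum>j\<in>UNIV. Phi P B N n j))"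
  proof (intro sum_mono mult_left_mono)
    fix xs :: "'s list"
    show "Phi P B N n (last (i # xs)) \<le> (\<Sum>j\<in>UNIV. Phi P B N n j)"
      by (rule member_le_sum) (auto intro: Phi_nonneg P_nonneg N_nonneg)
    show "0 \<le> ?w i xs"
      using path_prob_nonneg[of P, OF P_nonneg] N_nonneg by simp
  qed
  also have "\<dots> = Phi P B N m i * (\<Sum>j\<in>UNIV. Phi P B N n j)"
    by (simp add: Phi_def sum_distrib_right)
  finally show ?thesis .
qed

lemma sum_Phi_add_le:
  fixes P :: "'s::finite \<Rightarrow> 's \<Rightarrow> real"
  assumes "\<And>i j. 0 \<le> P i j"
    and "\<And>A. 0 \<le> N A"
    and "\<And>A A'. N (A ** A') \<le> N A * N A'"
  shows "(\<Sum>j\<in>UNIV. Phi P B N (m + n) j) \<le> (\<Sum>j\<in>UNIV. Phi P B N m j) * (\<Sum>j\<in>UNIV. Phi P B N n j)"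
  unfolding sum_distrib_right using assms by (intro sum_mono Phi_add_le)

theorem proposition2:
  fixes P :: "'s::finite \<Rightarrow> 's \<Rightarrow> real"
    and B :: "'s \<Rightarrow> real^'p^'p"
    and N :: "real^'p^'p \<Rightarrow> real"
  assumes "stochastic_matrix P"
    and "submult_matrix_norm N"
  shows "(\<forall>i. (\<lambda>n. Phi P B N n i) \<longlonglongrightarrow> 0) \<longleftrightarrow>
         (\<exists>(C::real) (\<gamma>::real). 0 < \<gamma> \<and> \<gamma> < 1 \<and> (\<forall>n\<ge>1. \<forall>i. Phi P B N n i \<le> C * \<gamma> ^ n))"
proof -
  have P_nonneg: "\<And>i j. 0 \<le> P i j" and N_nonneg: "\<And>A. 0 \<le> N A"
    and N_mult: "\<And>A A'. N (A ** A') \<le> N A * N A'"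
    using assms by (auto simp: stochastic_matrix_def submult_matrix_norm_def)
  note Phi_nonneg = Phi_nonneg[where P = P and N = N, OF P_nonneg N_nonneg]
  define S where "S n = (\<Sum>j\<in>UNIV. Phi P B N n j)" for n
  have S_nonneg: "0 \<le> S n" for n
    unfolding S_def using Phi_nonneg by (rule sum_nonneg)
  have S_submult: "S (m + n) \<le> S m * S n" for m n
    unfolding S_def using P_nonneg N_nonneg N_mult by (rule sum_Phi_add_le)
  have Phi_le_S: "Phi P B N n i \<le> S n" for n i
    unfolding S_def by (rule member_le_sum) (auto intro: Phi_nonneg)
  show ?thesis
  proof
    assume "\<forall>i. (\<lambda>n. Phi P B N n i) \<longlonglongrightarrow> 0"
    then have "S \<longlonglongrightarrow> 0"
      unfolding S_def by (auto intro!: tendsto_null_sum)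
    with S_nonneg S_submult obtain C \<gamma> where "0 < \<gamma>" "\<gamma> < 1" and S_le: "\<And>n. S n \<le> C * \<gamma> ^ n"
      by (rule submultiplicative_tendsto_zero_imp_geometric) blast
    have "Phi P B N n i \<le> C * \<gamma> ^ n" for n i
      using Phi_le_S S_le by (rule order_trans)
    with \<open>0 < \<gamma>\<close> \<open>\<gamma> < 1\<close>
    show "\<exists>C \<gamma>. 0 < \<gamma> \<and> \<gamma> < 1 \<and> (\<forall>n\<ge>1. \<forall>i. Phi P B N n i \<le> C * \<gamma> ^ n)"
      by blast
  next
    assume "\<exists>C \<gamma>. 0 < \<gamma> \<and> \<gamma> < 1 \<and> (\<forall>n\<ge>1. \<forall>i. Phi P B N n i \<le> C * \<gamma> ^ n)"
    then obtain C \<gamma> where "0 < \<gamma>" "\<gamma> < (1::real)"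
      and Phi_le: "\<And>n i. n \<ge> 1 \<Longrightarrow> Phi P B N n i \<le> C * \<gamma> ^ n"
      by blast
    then show "\<forall>i. (\<lambda>n. Phi P B N n i) \<longlonglongrightarrow> 0"
      using Phi_nonneg by (intro allI geometric_bound_imp_tendsto_zero[of _ 1 C \<gamma>]) auto
  qed
qed

end
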